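(* Let $\mathbb{F}_0=(F_0,\lambda_0F_0,\frac{\lambda_0}{1-\lambda_0})\in\mathcal{M}_+$ with $\lambda_0\in(0,1)$ and $\int F_0\,dv>0$, and let $\delta>0$. Then there exists $\varepsilon>0$ such that every $\mathbb{F}\in\mathcal{X}$ with $\mathbb{F}>0$ and $\|\mathbb{F}-\mathbb{F}_0\|_{\mathcal{X}}<\varepsilon$ can be written as $\mathbb{F}=\bar{\mathbb{F}}+W$ where $\bar{\mathbb{F}}=(\bar F,\bar\lambda\bar F,\frac{\bar\lambda}{1-\bar\lambda})\in\mathcal{M}$ with $\bar\lambda\in(0,1)$, and $W=(\alpha,-\alpha,\theta)\in\mathcal{X}$ with $\int_{\mathbb{R}^3}\alpha\,dv=\int_{\mathbb{S}^2}\theta\,dn$ and $\|W\|_{\mathcal{X}}<\delta$; this decomposition is unique among decompositions with $(\bar F,\alpha,\theta,\bar\lambda)$ in a neighborhood of $(F_0,0,0,\lambda_0)$. Moreover $\bar F>0$ a.e., so $\bar{\mathbb{F}}\in\mathcal{M}_+$.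
   Context: $L^1_k(\mathbb{R}^3)$ has norm $\int|f|(1+|v|^2)^{k/2}dv$; $\mathbb{S}^2$ carries a surface measure normalized to total mass $1$. $\mathcal{X}=L^1_2(\mathbb{R}^3)\times L^1_2(\mathbb{R}^3)\times L^1(\mathbb{S}^2)$ with norm $\|(F^1,F^2,Q)\|_{\mathcal{X}}=\|F^1\|_{L^1_2}+\|F^2\|_{L^1_2}+\|Q\|_{L^1(\mathbb{S}^2)}$; $\mathbb{F}>0$ means each component is positive a.e. Manifold of steady states: $\mathcal{M}=\{(F,\lambda F,\frac{\lambda}{1-\lambda}):F\in L^1_2(\mathbb{R}^3),\lambda<1\}$ (the third component being a constant function on $\mathbb{S}^2$), and $\mathcal{M}_+=\{(F,\lambda F,\frac{\lambda}{1-\lambda})\in\mathcal{M}:F\ge0,\lambda\in[0,1)\}$. *)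

theory Defs
  imports "HOL-Analysis.Analysis"
begin

type_synonym vel = "real^3"

text \<open>Normalized surface measure on the unit sphere S^2 in R^3: the push-forward of the
  normalized Lebesgue measure on the punctured unit ball under radial projection
  (normalized cone measure, which equals the rotation-invariant surface probability measure).\<close>
definition sphere_measure :: "vel measure" where
  "sphere_measure = distr (uniform_measure lborel (ball 0 1 - {0}))
                          (restrict_space borel (sphere 0 1)) (\<lambda>x. x /\<^sub>R norm x)"

definition L12 :: "(vel \<Rightarrow> real) \<Rightarrow> bool" where
  "L12 f \<longleftrightarrow> f \<in> borel_measurable lborel \<and> integrable lborel (\<lambda>v. f v * (1 + (norm v)^2))"

definition normL12 :: "(vel \<Rightarrow> real) \<Rightarrow> real" where
  "normL12 f = (LINT v|lborel. \<bar>f v\<bar> * (1 + (norm v)^2))"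

definition L1S :: "(vel \<Rightarrow> real) \<Rightarrow> bool" where
  "L1S q \<longleftrightarrow> q \<in> borel_measurable sphere_measure \<and> integrable sphere_measure q"

definition normS :: "(vel \<Rightarrow> real) \<Rightarrow> real" where
  "normS q = (LINT n|sphere_measure. \<bar>q n\<bar>)"

definition inX :: "(vel \<Rightarrow> real) \<Rightarrow> (vel \<Rightarrow> real) \<Rightarrow> (vel \<Rightarrow> real) \<Rightarrow> bool" where
  "inX F1 F2 Q \<longleftrightarrow> L12 F1 \<and> L12 F2 \<and> L1S Q"

definition normX :: "(vel \<Rightarrow> real) \<Rightarrow> (vel \<Rightarrow> real) \<Rightarrow> (vel \<Rightarrow> real) \<Rightarrow> real" where
  "normX F1 F2 Q = normL12 F1 + normL12 F2 + normS Q"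

definition posX :: "(vel \<Rightarrow> real) \<Rightarrow> (vel \<Rightarrow> real) \<Rightarrow> (vel \<Rightarrow> real) \<Rightarrow> bool" where
  "posX F1 F2 Q \<longleftrightarrow> (AE v in lborel. F1 v > 0) \<and> (AE v in lborel. F2 v > 0)
                     \<and> (AE n in sphere_measure. Q n > 0)"

definition is_decomp :: "(vel \<Rightarrow> real) \<Rightarrow> (vel \<Rightarrow> real) \<Rightarrow> (vel \<Rightarrow> real) \<Rightarrow>
    (vel \<Rightarrow> real) \<Rightarrow> real \<Rightarrow> (vel \<Rightarrow> real) \<Rightarrow> (vel \<Rightarrow> real) \<Rightarrow> bool" where
  "is_decomp F1 F2 Q Fb lb \<alpha> \<theta> \<longleftrightarrow>
     L12 Fb \<and> lb < 1 \<and> L12 \<alpha> \<and> L1S \<theta> \<and>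
     (AE v in lborel. F1 v = Fb v + \<alpha> v) \<and>
     (AE v in lborel. F2 v = lb * Fb v - \<alpha> v) \<and>
     (AE n in sphere_measure. Q n = lb / (1 - lb) + \<theta> n) \<and>
     (LINT v|lborel. \<alpha> v) = (LINT n|sphere_measure. \<theta> n)"

definition nbhd_dist :: "(vel \<Rightarrow> real) \<Rightarrow> real \<Rightarrow> (vel \<Rightarrow> real) \<Rightarrow> real \<Rightarrow>
    (vel \<Rightarrow> real) \<Rightarrow> (vel \<Rightarrow> real) \<Rightarrow> real" where
  "nbhd_dist F0 lam0 Fb lb \<alpha> \<theta> =
     normL12 (\<lambda>v. Fb v - F0 v) + normL12 \<alpha> + normS \<theta> + \<bar>lb - lam0\<bar>"

end

theory Submission
  imports Defs "HOL-Probability.Probability_Measure"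
begin

text \<open>Once the parameter l is fixed, the equations Fbar + W = F force
  Fb = (F1 + F2) / (1 + l), \<alpha> = F1 - Fb and \<theta> = Q - l / (1 - l), so a decomposition is
  the same thing as a root of the scalar equation \<integral>\<alpha> = \<integral>\<theta>. In terms of the masses a, b, q
  of F1, F2, Q it reads a - (a + b) / (1 + l) = q - l / (1 - l): the left side is
  nondecreasing in l when a + b \<ge> 0 and the right side strictly decreasing, which gives
  uniqueness. For the data of F0 the root is lam0, and the masses of F differ from those of
  F0 by at most 2 \<parallel>F - F0\<parallel>, so the intermediate value theorem provides a root close to lam0.
  The explicit formulas then make Fb, \<alpha>, \<theta> depend Lipschitz-continuously on (F, l), and
  Fb inherits positivity from F1 and F2.\<close>

lemma abs_le_weighted_abs: "\<bar>x\<bar> \<le> \<bar>x\<bar> * (1 + (norm (v::vel))\<^sup>2)"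
  by (simp add: distrib_left)

lemma L12_integrable_weighted_abs:
  "L12 f \<Longrightarrow> integrable lborel (\<lambda>v. \<bar>f v\<bar> * (1 + (norm v)\<^sup>2))"
  unfolding L12_def
  by (drule conjunct2, drule integrable_abs) (simp add: abs_mult)

lemma L12_integrable: "L12 f \<Longrightarrow> integrable lborel f"
  unfolding L12_def
  by (rule Bochner_Integration.integrable_bound[where f="\<lambda>v. f v * (1 + (norm v)\<^sup>2)"])
     (auto simp: abs_mult intro!: abs_le_weighted_abs)

lemma normL12_nonneg: "0 \<le> normL12 f"
  unfolding normL12_def by (intro integral_nonneg_AE) auto

lemma abs_integral_le_normL12: "L12 f \<Longrightarrow> \<bar>LINT v|lborel. f v\<bar> \<le> normL12 f"
  unfolding normL12_def
  by (rule integral_abs_bound_integral)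
     (auto intro: L12_integrable L12_integrable_weighted_abs abs_le_weighted_abs)

lemma L12_lincomb:
  assumes f: "L12 f" and g: "L12 g" and h: "\<And>v. h v = a * f v + b * g v"
  shows "L12 h" "normL12 h \<le> \<bar>a\<bar> * normL12 f + \<bar>b\<bar> * normL12 g"
proof -
  define w :: "vel \<Rightarrow> real" where "w v = 1 + (norm v)\<^sup>2" for v
  have w: "0 < w v" for v by (simp add: w_def add_pos_nonneg)
  have h_eq: "h = (\<lambda>v. a * f v + b * g v)" using h by auto
  note [measurable] = f[unfolded L12_def, THEN conjunct1] g[unfolded L12_def, THEN conjunct1]
  show L12h: "L12 h"
  proof -
    have "integrable lborel (\<lambda>v. a * (f v * w v) + b * (g v * w v))"
      using f g unfolding L12_def w_def by simp
    then show ?thesis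
      unfolding L12_def h_eq w_def by (simp add: algebra_simps)
  qed
  have "normL12 h \<le> (LINT v|lborel. \<bar>a\<bar> * (\<bar>f v\<bar> * w v) + \<bar>b\<bar> * (\<bar>g v\<bar> * w v))"
    unfolding normL12_def w_def[symmetric]
  proof (rule integral_mono)
    fix v
    have "\<bar>h v\<bar> \<le> \<bar>a\<bar> * \<bar>f v\<bar> + \<bar>b\<bar> * \<bar>g v\<bar>"
      unfolding h by (metis abs_mult abs_triangle_ineq)
    then show "\<bar>h v\<bar> * w v \<le> \<bar>a\<bar> * (\<bar>f v\<bar> * w v) + \<bar>b\<bar> * (\<bar>g v\<bar> * w v)"
      using w[of v] by (simp add: mult_right_mono flip: mult.assoc distrib_right)
  qed (use L12_integrable_weighted_abs[OF L12h] L12_integrable_weighted_abs[OF f]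
        L12_integrable_weighted_abs[OF g] in \<open>auto simp: w_def\<close>)
  also have "\<dots> = \<bar>a\<bar> * normL12 f + \<bar>b\<bar> * normL12 g"
    using L12_integrable_weighted_abs[OF f] L12_integrable_weighted_abs[OF g]
    by (simp add: normL12_def w_def)
  finally show "normL12 h \<le> \<bar>a\<bar> * normL12 f + \<bar>b\<bar> * normL12 g" .
qed

text \<open>The radial projection sends 0 to 0, off the sphere, so it is not measurable into the
  sphere and the distribution lemmas do not apply; the measure is computed from the definition.\<close>
lemma emeasure_sphere_measure:
  assumes A: "A \<in> sets (restrict_space borel (sphere (0::vel) 1))"
  shows "emeasure sphere_measure A =
     emeasure (uniform_measure lborel (ball 0 1 - {0})) ((\<lambda>x::vel. x /\<^sub>R norm x) -` A)"
proof -
  let ?M = "uniform_measure lborel (ball (0::vel) 1 - {0})"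
  let ?f = "\<lambda>x::vel. x /\<^sub>R norm x"
  let ?N = "restrict_space borel (sphere (0::vel) 1)"
  have preimage: "?f -` B \<in> sets ?M" if "B \<in> sets ?N" for B
  proof -
    have "B \<in> sets borel"
      using that sets_restrict_space_iff[of "sphere (0::vel) 1" borel] by auto
    have "?f \<in> borel_measurable borel" by measurable
    from measurable_sets[OF this \<open>B \<in> sets borel\<close>] show ?thesis by simp
  qed
  show ?thesis
    unfolding sphere_measure_def distr_def
  proof (subst emeasure_measure_of_sigma)
    show "countably_additive (sets ?N) (\<lambda>A. emeasure ?M (?f -` A \<inter> space ?M))"
    proof (intro countably_additiveI)
      fix A :: "nat \<Rightarrow> vel set"
      assume "range A \<subseteq> sets ?N" "disjoint_family A"
      then have "range (\<lambda>i. ?f -` A i) \<subseteq> sets ?M" "disjoint_family (\<lambda>i. ?f -` A i)"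
        using preimage by (auto simp: disjoint_family_on_def)
      from suminf_emeasure[OF this]
      show "(\<Sum>i. emeasure ?M (?f -` A i \<inter> space ?M)) = emeasure ?M (?f -` (\<Union>i. A i) \<inter> space ?M)"
        by (simp only: space_uniform_measure space_lborel space_borel Int_UNIV_right vimage_UN)
    qed
  qed (use A sets.sigma_algebra_axioms[of ?N] in \<open>auto simp: positive_def\<close>)
qed

lemma prob_space_sphere_measure: "prob_space sphere_measure"
proof
  let ?B = "ball (0::vel) 1 - {0}"
  have space: "space sphere_measure = sphere 0 1" by (simp add: sphere_measure_def)
  have "sphere (0::vel) 1 \<in> sets (restrict_space borel (sphere 0 1))"
    by (simp add: sets_restrict_space_iff)
  then have "emeasure sphere_measure (sphere 0 1) =
      emeasure (uniform_measure lborel ?B) ((\<lambda>x::vel. x /\<^sub>R norm x) -` sphere 0 1)"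
    by (rule emeasure_sphere_measure)
  also have "(\<lambda>x::vel. x /\<^sub>R norm x) -` sphere 0 1 = UNIV - {0}" by auto
  also have "emeasure (uniform_measure lborel ?B) (UNIV - {0}) = emeasure lborel ?B / emeasure lborel ?B"
  proof -
    have "?B \<inter> (UNIV - {0}) = ?B" by auto
    then show ?thesis by (subst emeasure_uniform_measure) auto
  qed
  also have "\<dots> = 1"
  proof -
    have "emeasure lborel ?B = emeasure lborel (ball (0::vel) 1)"
      by (rule emeasure_Diff_null_set) auto
    also have "\<dots> = ennreal (unit_ball_vol (real DIM(vel)))"
      using emeasure_ball[of 1 "0::vel"] by simp
    finally have "emeasure lborel ?B = ennreal (unit_ball_vol (real DIM(vel)))" .
    moreover have "unit_ball_vol (real DIM(vel)) \<noteq> 0"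
      using unit_ball_vol_pos[of "real DIM(vel)"] by linarith
    ultimately show ?thesis by (simp add: divide_eq_1_ennreal)
  qed
  finally show "emeasure sphere_measure (space sphere_measure) = 1" by (simp add: space)
qed

interpretation sphere: prob_space sphere_measure
  by (rule prob_space_sphere_measure)

lemma normS_nonneg: "0 \<le> normS q"
  unfolding normS_def by (intro integral_nonneg_AE) auto

lemma abs_integral_le_normS: "L1S q \<Longrightarrow> \<bar>LINT n|sphere_measure. q n\<bar> \<le> normS q"
  unfolding normS_def L1S_def by (intro integral_abs_bound_integral) auto

lemma L1S_add_const:
  assumes q: "L1S q" and r: "\<And>n. r n = q n + c"
  shows "L1S r" "(LINT n|sphere_measure. r n) = (LINT n|sphere_measure. q n) + c"
    "normS r \<le> normS q + \<bar>c\<bar>"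
proof -
  have r_eq: "r = (\<lambda>n. q n + c)" using r by auto
  have qi: "integrable sphere_measure q" using q by (simp add: L1S_def)
  show "L1S r" using q unfolding L1S_def r_eq by auto
  show "(LINT n|sphere_measure. r n) = (LINT n|sphere_measure. q n) + c"
    unfolding r_eq using qi by (simp add: sphere.prob_space)
  have "normS r \<le> (LINT n|sphere_measure. \<bar>q n\<bar> + \<bar>c\<bar>)"
    unfolding normS_def r_eq using qi by (intro integral_mono) (auto simp: abs_triangle_ineq)
  also have "\<dots> = normS q + \<bar>c\<bar>"
    unfolding normS_def using qi by (simp add: sphere.prob_space)
  finally show "normS r \<le> normS q + \<bar>c\<bar>" .
qed

definition decomp_defect :: "real \<Rightarrow> real \<Rightarrow> real \<Rightarrow> real \<Rightarrow> real" where
  "decomp_defect a b q l = (a - (a + b) / (1 + l)) - (q - l / (1 - l))"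

lemma odds_strict_mono: "l < l' \<Longrightarrow> l' < 1 \<Longrightarrow> l / (1 - l) < l' / (1 - (l'::real))"
  by (simp add: field_simps)

lemma decomp_defect_strict_mono:
  assumes "-1 < l" "l < l'" "l' < 1" "0 \<le> a + b"
  shows "decomp_defect a b q l < decomp_defect a b q l'"
proof -
  have "(a + b) / (1 + l') \<le> (a + b) / (1 + l)"
    using assms by (intro divide_left_mono) auto
  moreover have "l / (1 - l) < l' / (1 - l')"
    using assms by (intro odds_strict_mono)
  ultimately show ?thesis unfolding decomp_defect_def by linarith
qed

lemma integral_explicit_decomp:
  assumes "L12 F1" "L12 F2" "L1S Q"
  shows "(LINT v|lborel. F1 v - (F1 v + F2 v) / (1 + l))
           = (LINT v|lborel. F1 v) - ((LINT v|lborel. F1 v) + (LINT v|lborel. F2 v)) / (1 + l)"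
    "(LINT n|sphere_measure. Q n - l / (1 - l)) = (LINT n|sphere_measure. Q n) - l / (1 - l)"
  using L12_integrable[OF assms(1)] L12_integrable[OF assms(2)]
    L1S_add_const(2)[OF assms(3), of "\<lambda>n. Q n - l / (1 - l)" "- (l / (1 - l))"]
  by simp_all

lemma is_decomp_explicit:
  assumes F1: "L12 F1" and F2: "L12 F2" and Q: "L1S Q" and l: "-1 < l" "l < 1"
    and defect: "decomp_defect (LINT v|lborel. F1 v) (LINT v|lborel. F2 v) (LINT n|sphere_measure. Q n) l = 0"
  shows "is_decomp F1 F2 Q (\<lambda>v. (F1 v + F2 v) / (1 + l)) l
           (\<lambda>v. F1 v - (F1 v + F2 v) / (1 + l)) (\<lambda>n. Q n - l / (1 - l))"
  unfolding is_decomp_def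
proof (intro conjI AE_I2)
  show "L12 (\<lambda>v. (F1 v + F2 v) / (1 + l))"
    by (rule L12_lincomb(1)[OF F1 F2, of _ "1 / (1 + l)" "1 / (1 + l)"]) (simp add: add_divide_distrib)
  show "L12 (\<lambda>v. F1 v - (F1 v + F2 v) / (1 + l))"
    by (rule L12_lincomb(1)[OF F1 F2, of _ "1 - 1 / (1 + l)" "- 1 / (1 + l)"])
       (simp add: diff_divide_distrib add_divide_distrib left_diff_distrib)
  show "L1S (\<lambda>n. Q n - l / (1 - l))"
    by (rule L1S_add_const(1)[OF Q]) simp
  show "F2 v = l * ((F1 v + F2 v) / (1 + l)) - (F1 v - (F1 v + F2 v) / (1 + l))" for v
  proof -
    have "(1 + l) * ((F1 v + F2 v) / (1 + l)) = F1 v + F2 v" using l by simp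
    then show ?thesis by (simp only: distrib_right mult_1_left)
  qed
  show "(LINT v|lborel. F1 v - (F1 v + F2 v) / (1 + l)) = (LINT n|sphere_measure. Q n - l / (1 - l))"
    using defect by (simp add: integral_explicit_decomp[OF F1 F2 Q] decomp_defect_def)
qed (use l in auto)

lemma is_decomp_imp_explicit:
  assumes decomp: "is_decomp F1 F2 Q Fb l \<alpha> \<theta>" and F1: "L12 F1" and F2: "L12 F2" and Q: "L1S Q"
    and l: "-1 < l"
  shows "decomp_defect (LINT v|lborel. F1 v) (LINT v|lborel. F2 v) (LINT n|sphere_measure. Q n) l = 0"
    "AE v in lborel. Fb v = (F1 v + F2 v) / (1 + l)"
    "AE v in lborel. \<alpha> v = F1 v - (F1 v + F2 v) / (1 + l)"
    "AE n in sphere_measure. \<theta> n = Q n - l / (1 - l)"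
proof -
  have F1_eq: "AE v in lborel. F1 v = Fb v + \<alpha> v"
    and F2_eq: "AE v in lborel. F2 v = l * Fb v - \<alpha> v"
    and Q_eq: "AE n in sphere_measure. Q n = l / (1 - l) + \<theta> n"
    and masses: "(LINT v|lborel. \<alpha> v) = (LINT n|sphere_measure. \<theta> n)"
    using decomp unfolding is_decomp_def by auto
  show "AE v in lborel. Fb v = (F1 v + F2 v) / (1 + l)"
    using F1_eq F2_eq by eventually_elim (use l in \<open>simp add: field_simps\<close>)
  show \<alpha>_eq: "AE v in lborel. \<alpha> v = F1 v - (F1 v + F2 v) / (1 + l)"
    using F1_eq F2_eq by eventually_elim (use l in \<open>simp add: field_simps\<close>)
  show \<theta>_eq: "AE n in sphere_measure. \<theta> n = Q n - l / (1 - l)"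
    using Q_eq by eventually_elim simp
  have "(LINT v|lborel. \<alpha> v) = (LINT v|lborel. F1 v - (F1 v + F2 v) / (1 + l))"
    using \<alpha>_eq by (rule integral_cong_AE[rotated 2]) (use decomp F1 F2 in \<open>auto simp: is_decomp_def L12_def\<close>)
  moreover have "(LINT n|sphere_measure. \<theta> n) = (LINT n|sphere_measure. Q n - l / (1 - l))"
    using \<theta>_eq by (rule integral_cong_AE[rotated 2]) (use decomp Q in \<open>auto simp: is_decomp_def L1S_def\<close>)
  ultimately show "decomp_defect (LINT v|lborel. F1 v) (LINT v|lborel. F2 v) (LINT n|sphere_measure. Q n) l = 0"
    using masses by (simp add: integral_explicit_decomp[OF F1 F2 Q] decomp_defect_def)
qed

lemma is_decomp_unique:
  assumes F1: "L12 F1" and F2: "L12 F2" and Q: "L1S Q"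
    and mass: "0 \<le> (LINT v|lborel. F1 v) + (LINT v|lborel. F2 v)"
    and decomp: "is_decomp F1 F2 Q Fb l \<alpha> \<theta>" "-1 < l"
    and decomp': "is_decomp F1 F2 Q Fb' l' \<alpha>' \<theta>'" "-1 < l'"
  shows "l = l' \<and> (AE v in lborel. Fb v = Fb' v) \<and> (AE v in lborel. \<alpha> v = \<alpha>' v)
           \<and> (AE n in sphere_measure. \<theta> n = \<theta>' n)"
proof -
  note explicit = is_decomp_imp_explicit[OF decomp(1) F1 F2 Q decomp(2)]
  note explicit' = is_decomp_imp_explicit[OF decomp'(1) F1 F2 Q decomp'(2)]
  have "l < 1" "l' < 1" using decomp(1) decomp'(1) by (auto simp: is_decomp_def)
  then have l_eq: "l = l'"
    using decomp_defect_strict_mono[OF _ _ _ mass] decomp(2) decomp'(2) explicit(1) explicit'(1)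
    by (metis less_irrefl linorder_neqE_linordered_idom)
  have "AE v in lborel. Fb v = Fb' v"
    using explicit(2) explicit'(2) unfolding l_eq by eventually_elim simp
  moreover have "AE v in lborel. \<alpha> v = \<alpha>' v"
    using explicit(3) explicit'(3) unfolding l_eq by eventually_elim simp
  moreover have "AE n in sphere_measure. \<theta> n = \<theta>' n"
    using explicit(4) explicit'(4) unfolding l_eq by eventually_elim simp
  ultimately show ?thesis using l_eq by blast
qed

lemma decomp_defect_perturbation:
  assumes "0 \<le> l"
  shows "\<bar>decomp_defect a b q l - decomp_defect a' b' q' l\<bar>
           \<le> \<bar>a - a'\<bar> + \<bar>(a + b) - (a' + b')\<bar> + \<bar>q - q'\<bar>"
proof -
  have "decomp_defect a b q l - decomp_defect a' b' q' l
          = (a - a') - ((a + b) - (a' + b')) / (1 + l) - (q - q')"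
    by (simp add: decomp_defect_def diff_divide_distrib)
  moreover have "\<bar>((a + b) - (a' + b')) / (1 + l)\<bar> \<le> \<bar>(a + b) - (a' + b')\<bar>"
    using assms by (simp add: abs_divide divide_le_eq mult_le_cancel_left1)
  ultimately show ?thesis by linarith
qed

lemma steady_decomp_defect_bounds:
  assumes m: "0 < m" and \<tau>: "0 < \<tau>" "\<tau> \<le> lam0" "lam0 + \<tau> < 1"
  defines "d \<equiv> decomp_defect m (lam0 * m) (lam0 / (1 - lam0))"
  shows "m * \<tau> / 2 < d (lam0 + \<tau>)" "d (lam0 - \<tau>) < - (m * \<tau> / 2)"
proof -
  have d_eq: "d l = m * (l - lam0) / (1 + l) + (l / (1 - l) - lam0 / (1 - lam0))" if "-1 < l" for l
    using that by (simp add: d_def decomp_defect_def field_simps)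
  have "m * \<tau> / 2 < m * \<tau> / (1 + (lam0 + \<tau>))"
    using m \<tau> by (intro divide_strict_left_mono) auto
  moreover have "lam0 / (1 - lam0) < (lam0 + \<tau>) / (1 - (lam0 + \<tau>))"
    using \<tau> by (intro odds_strict_mono) auto
  moreover have "d (lam0 + \<tau>)
      = m * \<tau> / (1 + (lam0 + \<tau>)) + ((lam0 + \<tau>) / (1 - (lam0 + \<tau>)) - lam0 / (1 - lam0))"
    using d_eq[of "lam0 + \<tau>"] \<tau> by (simp only: add_diff_cancel_left')
  ultimately show "m * \<tau> / 2 < d (lam0 + \<tau>)" by linarith
  have "m * \<tau> / 2 < m * \<tau> / (1 + (lam0 - \<tau>))"
    using m \<tau> by (intro divide_strict_left_mono) auto
  moreover have "(lam0 - \<tau>) / (1 - (lam0 - \<tau>)) < lam0 / (1 - lam0)"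
    using \<tau> by (intro odds_strict_mono) auto
  moreover have "d (lam0 - \<tau>)
      = m * ((lam0 - \<tau>) - lam0) / (1 + (lam0 - \<tau>)) + ((lam0 - \<tau>) / (1 - (lam0 - \<tau>)) - lam0 / (1 - lam0))"
    using \<tau> by (intro d_eq) linarith
  moreover have "m * ((lam0 - \<tau>) - lam0) / (1 + (lam0 - \<tau>)) = - (m * \<tau> / (1 + (lam0 - \<tau>)))"
    by simp
  ultimately show "d (lam0 - \<tau>) < - (m * \<tau> / 2)" by argo
qed

lemma decomp_defect_root_near:
  assumes m: "0 < m" and \<tau>: "0 < \<tau>" "\<tau> \<le> lam0" "lam0 + \<tau> < 1"
    and close: "\<bar>a - m\<bar> + \<bar>a + b - (1 + lam0) * m\<bar> + \<bar>q - lam0 / (1 - lam0)\<bar> < m * \<tau> / 2"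
  shows "\<exists>l. \<bar>l - lam0\<bar> < \<tau> \<and> decomp_defect a b q l = 0"
proof -
  have near: "\<bar>decomp_defect a b q l - decomp_defect m (lam0 * m) (lam0 / (1 - lam0)) l\<bar> < m * \<tau> / 2"
    if "0 \<le> l" for l
    using decomp_defect_perturbation[OF that, of a b q m "lam0 * m" "lam0 / (1 - lam0)"] close
    by (simp add: algebra_simps)
  note steady = steady_decomp_defect_bounds[OF m \<tau>]
  have lower: "decomp_defect a b q (lam0 - \<tau>) < 0"
    using near[of "lam0 - \<tau>"] steady(2) \<tau> by linarith
  have upper: "0 < decomp_defect a b q (lam0 + \<tau>)"
    using near[of "lam0 + \<tau>"] steady(1) \<tau> by linarith
  have "continuous_on {lam0 - \<tau>..lam0 + \<tau>} (decomp_defect a b q)"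
    using \<tau> unfolding decomp_defect_def by (intro continuous_intros) auto
  then have "\<exists>l \<ge> lam0 - \<tau>. l \<le> lam0 + \<tau> \<and> decomp_defect a b q l = 0"
    using lower upper \<tau> by (intro IVT') auto
  then obtain l where "lam0 - \<tau> \<le> l" "l \<le> lam0 + \<tau>" "decomp_defect a b q l = 0"
    by blast
  moreover from this have "l \<noteq> lam0 - \<tau>" "l \<noteq> lam0 + \<tau>" using lower upper by auto
  ultimately show ?thesis by (intro exI[of _ l]) auto
qed

lemma abs_odds_diff_le:
  fixes l lam0 :: real
  assumes "lam0 < 1" "\<bar>l - lam0\<bar> \<le> (1 - lam0) / 2"
  shows "\<bar>l / (1 - l) - lam0 / (1 - lam0)\<bar> \<le> 2 * \<bar>l - lam0\<bar> / (1 - lam0)\<^sup>2"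
proof -
  have gap: "(1 - lam0) / 2 \<le> 1 - l" using abs_le_D1[OF assms(2)] by argo
  then have denom: "(1 - lam0)\<^sup>2 / 2 \<le> (1 - lam0) * (1 - l)"
    using assms(1) by (simp add: power2_eq_square mult_left_mono flip: times_divide_eq_right)
  have l1: "0 < 1 - l" using gap assms(1) by argo
  have "l / (1 - l) - lam0 / (1 - lam0) = (l - lam0) / ((1 - lam0) * (1 - l))"
    using gap assms(1) by (simp add: divide_simps) (simp add: algebra_simps)
  then have "\<bar>l / (1 - l) - lam0 / (1 - lam0)\<bar> = \<bar>l - lam0\<bar> / ((1 - lam0) * (1 - l))"
    using l1 assms(1) by (simp add: abs_divide abs_mult)
  also have "\<dots> \<le> \<bar>l - lam0\<bar> / ((1 - lam0)\<^sup>2 / 2)"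
    using denom assms(1) l1 by (intro divide_left_mono) auto
  finally show ?thesis by (simp add: mult.commute)
qed

lemma explicit_decomp_norms_le:
  assumes F0: "L12 F0" and F1: "L12 F1" and F2: "L12 F2" and Q: "L1S Q"
    and l: "0 \<le> l" "\<bar>l - lam0\<bar> \<le> (1 - lam0) / 2" and lam0: "lam0 < 1"
    and close: "normX (\<lambda>v. F1 v - F0 v) (\<lambda>v. F2 v - lam0 * F0 v) (\<lambda>n. Q n - lam0 / (1 - lam0)) \<le> E"
  shows "normL12 (\<lambda>v. (F1 v + F2 v) / (1 + l) - F0 v) \<le> E + \<bar>l - lam0\<bar> * normL12 F0"
    "normL12 (\<lambda>v. F1 v - (F1 v + F2 v) / (1 + l)) \<le> 2 * E + \<bar>l - lam0\<bar> * normL12 F0"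
    "normS (\<lambda>n. Q n - l / (1 - l)) \<le> E + 2 * \<bar>l - lam0\<bar> / (1 - lam0)\<^sup>2"
proof -
  define e1 e2 e3 where "e1 = normL12 (\<lambda>v. F1 v - F0 v)" and "e2 = normL12 (\<lambda>v. F2 v - lam0 * F0 v)"
    and "e3 = normS (\<lambda>n. Q n - lam0 / (1 - lam0))"
  have E: "e1 + e2 + e3 \<le> E" "0 \<le> e1" "0 \<le> e2" "0 \<le> e3"
    using close by (auto simp: e1_def e2_def e3_def normX_def normL12_nonneg normS_nonneg)
  have d1: "L12 (\<lambda>v. F1 v - F0 v)" and d2: "L12 (\<lambda>v. F2 v - lam0 * F0 v)"
    by (rule L12_lincomb(1)[OF F1 F0, of _ 1 "-1"] L12_lincomb(1)[OF F2 F0, of _ 1 "-lam0"]; simp)+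
  define S where "S v = (F1 v - F0 v) + (F2 v - lam0 * F0 v)" for v
  have S: "L12 S" "normL12 S \<le> e1 + e2"
    using L12_lincomb[OF d1 d2, of S 1 1] by (auto simp: S_def e1_def e2_def)
  have "(F1 v + F2 v) / (1 + l) - F0 v = 1 / (1 + l) * S v + (lam0 - l) / (1 + l) * F0 v" for v
    using l unfolding S_def by (simp add: divide_simps) (simp add: algebra_simps)
  note Fb = L12_lincomb[OF S(1) F0, OF this]
  have "\<bar>1 / (1 + l)\<bar> * normL12 S \<le> normL12 S"
    using l by (intro mult_left_le_one_le normL12_nonneg) auto
  moreover have "\<bar>(lam0 - l) / (1 + l)\<bar> * normL12 F0 \<le> \<bar>l - lam0\<bar> * normL12 F0"
  proof (intro mult_right_mono normL12_nonneg)
    have "\<bar>(lam0 - l) / (1 + l)\<bar> = \<bar>l - lam0\<bar> / (1 + l)"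
      using l by (simp add: abs_divide abs_minus_commute)
    also have "\<dots> \<le> \<bar>l - lam0\<bar> / 1"
      using l by (intro divide_left_mono) auto
    finally show "\<bar>(lam0 - l) / (1 + l)\<bar> \<le> \<bar>l - lam0\<bar>" by simp
  qed
  ultimately show Fb_le: "normL12 (\<lambda>v. (F1 v + F2 v) / (1 + l) - F0 v) \<le> E + \<bar>l - lam0\<bar> * normL12 F0"
    using Fb(2) S(2) E by linarith
  have "normL12 (\<lambda>v. F1 v - (F1 v + F2 v) / (1 + l))
          \<le> \<bar>1\<bar> * e1 + \<bar>-1\<bar> * normL12 (\<lambda>v. (F1 v + F2 v) / (1 + l) - F0 v)"
    unfolding e1_def by (rule L12_lincomb(2)[OF d1 Fb(1)]) simp
  then show "normL12 (\<lambda>v. F1 v - (F1 v + F2 v) / (1 + l)) \<le> 2 * E + \<bar>l - lam0\<bar> * normL12 F0"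
    using Fb_le E by simp
  have "normS (\<lambda>n. Q n - l / (1 - l)) \<le> e3 + \<bar>lam0 / (1 - lam0) - l / (1 - l)\<bar>"
    unfolding e3_def by (rule L1S_add_const(3)[OF L1S_add_const(1)[OF Q]]) auto
  then show "normS (\<lambda>n. Q n - l / (1 - l)) \<le> E + 2 * \<bar>l - lam0\<bar> / (1 - lam0)\<^sup>2"
    using abs_odds_diff_le[OF lam0 l(2)] E by (simp add: abs_minus_commute)
qed

lemma explicit_decomp_close:
  assumes F0: "L12 F0" and F1: "L12 F1" and F2: "L12 F2" and Q: "L1S Q"
    and l: "0 \<le> l" "\<bar>l - lam0\<bar> \<le> (1 - lam0) / 2" and lam0: "lam0 < 1"
    and close: "normX (\<lambda>v. F1 v - F0 v) (\<lambda>v. F2 v - lam0 * F0 v) (\<lambda>n. Q n - lam0 / (1 - lam0)) \<le> E"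
  defines "Fb \<equiv> \<lambda>v. (F1 v + F2 v) / (1 + l)" and "\<alpha> \<equiv> \<lambda>v. F1 v - (F1 v + F2 v) / (1 + l)"
    and "\<theta> \<equiv> \<lambda>n. Q n - l / (1 - l)" and "K \<equiv> 2 * normL12 F0 + 2 / (1 - lam0)\<^sup>2 + 1"
  shows "normX \<alpha> (\<lambda>v. - \<alpha> v) \<theta> \<le> 5 * E + K * \<bar>l - lam0\<bar>"
    and "nbhd_dist F0 lam0 Fb l \<alpha> \<theta> \<le> 5 * E + K * \<bar>l - lam0\<bar>"
proof -
  note norms = explicit_decomp_norms_le[OF F0 F1 F2 Q l lam0 close, folded \<alpha>_def \<theta>_def]
  have "0 \<le> normX (\<lambda>v. F1 v - F0 v) (\<lambda>v. F2 v - lam0 * F0 v) (\<lambda>n. Q n - lam0 / (1 - lam0))"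
    unfolding normX_def by (intro add_nonneg_nonneg normL12_nonneg normS_nonneg)
  with close have "0 \<le> E" by linarith
  moreover have "K * \<bar>l - lam0\<bar>
      = 2 * (\<bar>l - lam0\<bar> * normL12 F0) + 2 * \<bar>l - lam0\<bar> / (1 - lam0)\<^sup>2 + \<bar>l - lam0\<bar>"
    by (simp add: K_def algebra_simps)
  moreover have "normL12 (\<lambda>v. - \<alpha> v) = normL12 \<alpha>" by (simp add: normL12_def)
  ultimately show "normX \<alpha> (\<lambda>v. - \<alpha> v) \<theta> \<le> 5 * E + K * \<bar>l - lam0\<bar>"
    and "nbhd_dist F0 lam0 Fb l \<alpha> \<theta> \<le> 5 * E + K * \<bar>l - lam0\<bar>"
    using norms unfolding normX_def nbhd_dist_def Fb_def by linarith+
qed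

lemma mass_deviations_le:
  assumes F0: "L12 F0" and F1: "L12 F1" and F2: "L12 F2" and Q: "L1S Q"
    and close: "normX (\<lambda>v. F1 v - F0 v) (\<lambda>v. F2 v - lam0 * F0 v) (\<lambda>n. Q n - lam0 / (1 - lam0)) \<le> E"
  shows "\<bar>(LINT v|lborel. F1 v) - (LINT v|lborel. F0 v)\<bar>
         + \<bar>(LINT v|lborel. F1 v) + (LINT v|lborel. F2 v) - (1 + lam0) * (LINT v|lborel. F0 v)\<bar>
         + \<bar>(LINT n|sphere_measure. Q n) - lam0 / (1 - lam0)\<bar> \<le> 2 * E"
proof -
  have d1: "L12 (\<lambda>v. F1 v - F0 v)" and d2: "L12 (\<lambda>v. F2 v - lam0 * F0 v)"
    by (rule L12_lincomb(1)[OF F1 F0, of _ 1 "-1"] L12_lincomb(1)[OF F2 F0, of _ 1 "-lam0"]; simp)+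
  have d3: "L1S (\<lambda>n. Q n - lam0 / (1 - lam0))"
    and int3: "(LINT n|sphere_measure. Q n - lam0 / (1 - lam0)) = (LINT n|sphere_measure. Q n) - lam0 / (1 - lam0)"
    using L1S_add_const(1,2)[OF Q, of _ "- (lam0 / (1 - lam0))"] by auto
  have "\<bar>(LINT v|lborel. F1 v) - (LINT v|lborel. F0 v)\<bar> \<le> normL12 (\<lambda>v. F1 v - F0 v)"
    using abs_integral_le_normL12[OF d1] L12_integrable[OF F1] L12_integrable[OF F0] by simp
  moreover have "\<bar>(LINT v|lborel. F2 v) - lam0 * (LINT v|lborel. F0 v)\<bar> \<le> normL12 (\<lambda>v. F2 v - lam0 * F0 v)"
    using abs_integral_le_normL12[OF d2] L12_integrable[OF F2] L12_integrable[OF F0] by simp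
  moreover have "\<bar>(LINT n|sphere_measure. Q n) - lam0 / (1 - lam0)\<bar> \<le> normS (\<lambda>n. Q n - lam0 / (1 - lam0))"
    using abs_integral_le_normS[OF d3] int3 by simp
  ultimately show ?thesis
    using close normL12_nonneg[of "\<lambda>v. F1 v - F0 v"] normL12_nonneg[of "\<lambda>v. F2 v - lam0 * F0 v"]
    unfolding normX_def by (simp add: algebra_simps)
qed

lemma decomp_exists_near:
  assumes F0: "L12 F0" and F1: "L12 F1" and F2: "L12 F2" and Q: "L1S Q"
    and pos: "AE v in lborel. 0 < F1 v" "AE v in lborel. 0 < F2 v"
    and lam0: "lam0 < 1" and mass: "0 < (LINT v|lborel. F0 v)"
    and \<tau>: "0 < \<tau>" "\<tau> \<le> lam0" "\<tau> \<le> (1 - lam0) / 2"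
    and close: "normX (\<lambda>v. F1 v - F0 v) (\<lambda>v. F2 v - lam0 * F0 v) (\<lambda>n. Q n - lam0 / (1 - lam0)) \<le> E"
    and small: "E < (LINT v|lborel. F0 v) * \<tau> / 4"
  shows "\<exists>Fb l \<alpha> \<theta>. is_decomp F1 F2 Q Fb l \<alpha> \<theta> \<and> \<bar>l - lam0\<bar> < \<tau>
           \<and> normX \<alpha> (\<lambda>v. - \<alpha> v) \<theta> \<le> 5 * E + (2 * normL12 F0 + 2 / (1 - lam0)\<^sup>2 + 1) * \<tau>
           \<and> nbhd_dist F0 lam0 Fb l \<alpha> \<theta> \<le> 5 * E + (2 * normL12 F0 + 2 / (1 - lam0)\<^sup>2 + 1) * \<tau>
           \<and> (AE v in lborel. 0 < Fb v)"
proof -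
  have "\<bar>(LINT v|lborel. F1 v) - (LINT v|lborel. F0 v)\<bar>
         + \<bar>(LINT v|lborel. F1 v) + (LINT v|lborel. F2 v) - (1 + lam0) * (LINT v|lborel. F0 v)\<bar>
         + \<bar>(LINT n|sphere_measure. Q n) - lam0 / (1 - lam0)\<bar> < (LINT v|lborel. F0 v) * \<tau> / 2"
    using mass_deviations_le[OF F0 F1 F2 Q close] small by linarith
  moreover have "lam0 + \<tau> < 1" using \<tau>(3) lam0 by argo
  ultimately obtain l where l: "\<bar>l - lam0\<bar> < \<tau>"
    and root: "decomp_defect (LINT v|lborel. F1 v) (LINT v|lborel. F2 v) (LINT n|sphere_measure. Q n) l = 0"
    using decomp_defect_root_near[OF mass \<tau>(1,2)] by blast
  have l01: "0 \<le> l" "l < 1" using l \<tau> lam0 by (auto simp: abs_less_iff)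
  have "\<bar>l - lam0\<bar> \<le> (1 - lam0) / 2" using l \<tau>(3) by argo
  note bounds = explicit_decomp_close[OF F0 F1 F2 Q l01(1) this lam0 close]
  have "(2 * normL12 F0 + 2 / (1 - lam0)\<^sup>2 + 1) * \<bar>l - lam0\<bar>
          \<le> (2 * normL12 F0 + 2 / (1 - lam0)\<^sup>2 + 1) * \<tau>"
    using l by (intro mult_left_mono) (auto simp: normL12_nonneg)
  moreover have "is_decomp F1 F2 Q (\<lambda>v. (F1 v + F2 v) / (1 + l)) l
      (\<lambda>v. F1 v - (F1 v + F2 v) / (1 + l)) (\<lambda>n. Q n - l / (1 - l))"
    using is_decomp_explicit[OF F1 F2 Q _ l01(2) root] l01(1) by simp
  moreover have "AE v in lborel. 0 < (F1 v + F2 v) / (1 + l)"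
    using pos by eventually_elim (use l01 in simp)
  ultimately show ?thesis
    using bounds l by (intro exI conjI) (auto intro: order_trans)
qed

lemma abs_diff_le_nbhd_dist: "\<bar>l - lam0\<bar> \<le> nbhd_dist F0 lam0 Fb l \<alpha> \<theta>"
  using normL12_nonneg[of "\<lambda>v. Fb v - F0 v"] normL12_nonneg[of \<alpha>] normS_nonneg[of \<theta>]
  unfolding nbhd_dist_def by linarith

lemma small_perturbation_decomp_exists:
  assumes F0: "L12 F0" and lam0: "0 < lam0" "lam0 < 1" and mass: "0 < (LINT v|lborel. F0 v)"
    and \<delta>: "0 < \<delta>" and \<eta>: "0 < \<eta>" "\<eta> \<le> lam0" "\<eta> \<le> 1 - lam0"
  shows "\<exists>\<epsilon>>0. \<forall>F1 F2 Q. inX F1 F2 Q \<and> posX F1 F2 Q \<and>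
     normX (\<lambda>v. F1 v - F0 v) (\<lambda>v. F2 v - lam0 * F0 v) (\<lambda>n. Q n - lam0 / (1 - lam0)) < \<epsilon> \<longrightarrow>
     (\<exists>Fb l \<alpha> \<theta>. is_decomp F1 F2 Q Fb l \<alpha> \<theta> \<and> 0 < l \<and> l < 1 \<and>
        normX \<alpha> (\<lambda>v. - \<alpha> v) \<theta> < \<delta> \<and> nbhd_dist F0 lam0 Fb l \<alpha> \<theta> < \<eta> \<and> (AE v in lborel. 0 < Fb v))"
proof -
  define r where "r = min \<eta> \<delta>"
  define K where "K = 2 * normL12 F0 + 2 / (1 - lam0)\<^sup>2 + 1"
  define \<tau> where "\<tau> = r / (2 * K)"
  define \<epsilon> where "\<epsilon> = min ((LINT v|lborel. F0 v) * \<tau> / 4) (r / 10)"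
  have r: "0 < r" "r \<le> \<eta>" "r \<le> \<delta>" using \<eta> \<delta> by (auto simp: r_def)
  have K: "1 \<le> K" by (simp add: K_def normL12_nonneg)
  have "\<tau> \<le> r / 2" unfolding \<tau>_def using K r by (intro divide_left_mono) auto
  then have \<tau>: "0 < \<tau>" "\<tau> \<le> lam0" "\<tau> \<le> (1 - lam0) / 2" "K * \<tau> = r / 2"
    using K r \<eta> by (auto simp: \<tau>_def)
  have \<epsilon>: "0 < \<epsilon>" "\<epsilon> \<le> (LINT v|lborel. F0 v) * \<tau> / 4" "10 * \<epsilon> \<le> r"
    using mass \<tau> r by (auto simp: \<epsilon>_def)
  have "\<exists>Fb l \<alpha> \<theta>. is_decomp F1 F2 Q Fb l \<alpha> \<theta> \<and> 0 < l \<and> l < 1 \<and>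
        normX \<alpha> (\<lambda>v. - \<alpha> v) \<theta> < \<delta> \<and> nbhd_dist F0 lam0 Fb l \<alpha> \<theta> < \<eta> \<and> (AE v in lborel. 0 < Fb v)"
    if X: "inX F1 F2 Q" "posX F1 F2 Q"
      and close: "normX (\<lambda>v. F1 v - F0 v) (\<lambda>v. F2 v - lam0 * F0 v) (\<lambda>n. Q n - lam0 / (1 - lam0)) < \<epsilon>"
    for F1 F2 Q
  proof -
    have F: "L12 F1" "L12 F2" "L1S Q" and pos: "AE v in lborel. 0 < F1 v" "AE v in lborel. 0 < F2 v"
      using X by (auto simp: inX_def posX_def)
    have "normX (\<lambda>v. F1 v - F0 v) (\<lambda>v. F2 v - lam0 * F0 v) (\<lambda>n. Q n - lam0 / (1 - lam0))
        < (LINT v|lborel. F0 v) * \<tau> / 4"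
      using close \<epsilon>(2) by linarith
    from decomp_exists_near[OF F0 F pos lam0(2) mass \<tau>(1-3) order.refl this, folded K_def]
    show ?thesis
      using close \<epsilon>(3) \<tau> r by (fastforce simp: abs_less_iff)
  qed
  then show ?thesis using \<epsilon>(1) by blast
qed

lemma is_decomp_unique_near:
  assumes X: "inX F1 F2 Q" "posX F1 F2 Q" and \<eta>: "\<eta> \<le> 1 + lam0"
    and decomp: "is_decomp F1 F2 Q Fb l \<alpha> \<theta>" "nbhd_dist F0 lam0 Fb l \<alpha> \<theta> < \<eta>"
    and decomp': "is_decomp F1 F2 Q Fb' l' \<alpha>' \<theta>'" "nbhd_dist F0 lam0 Fb' l' \<alpha>' \<theta>' < \<eta>"
  shows "l = l' \<and> (AE v in lborel. Fb v = Fb' v) \<and> (AE v in lborel. \<alpha> v = \<alpha>' v)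
           \<and> (AE n in sphere_measure. \<theta> n = \<theta>' n)"
proof (rule is_decomp_unique[OF _ _ _ _ decomp(1) _ decomp'(1)])
  show "L12 F1" "L12 F2" "L1S Q" using X(1) by (auto simp: inX_def)
  have "AE v in lborel. 0 \<le> F1 v" "AE v in lborel. 0 \<le> F2 v"
    using X(2) unfolding posX_def by (auto elim: AE_mp)
  then show "0 \<le> (LINT v|lborel. F1 v) + (LINT v|lborel. F2 v)"
    by (intro add_nonneg_nonneg integral_nonneg_AE)
  show "-1 < l" "-1 < l'"
    using abs_diff_le_nbhd_dist[of l lam0 F0 Fb \<alpha> \<theta>] abs_diff_le_nbhd_dist[of l' lam0 F0 Fb' \<alpha>' \<theta>']
      decomp(2) decomp'(2) \<eta> by (auto simp: abs_less_iff)
qed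

theorem lemma4p1:
  fixes F0 :: "real^3 \<Rightarrow> real" and lam0 \<delta> :: real
  assumes F0_L12: "L12 F0"
    and F0_nonneg: "AE v in lborel. F0 v \<ge> 0"
    and lam0_pos: "0 < lam0" "lam0 < 1"
    and mass: "(LINT v|lborel. F0 v) > 0"
    and delta: "\<delta> > 0"
  shows "\<exists>\<epsilon>>0. \<exists>\<eta>>0. \<forall>F1 F2 Q.
     inX F1 F2 Q \<and> posX F1 F2 Q \<and>
     normX (\<lambda>v. F1 v - F0 v) (\<lambda>v. F2 v - lam0 * F0 v) (\<lambda>n. Q n - lam0 / (1 - lam0)) < \<epsilon>
     \<longrightarrow>
     (\<exists>Fb lb \<alpha> \<theta>. is_decomp F1 F2 Q Fb lb \<alpha> \<theta> \<and> 0 < lb \<and> lb < 1 \<and>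
        normX \<alpha> (\<lambda>v. - \<alpha> v) \<theta> < \<delta> \<and>
        nbhd_dist F0 lam0 Fb lb \<alpha> \<theta> < \<eta> \<and>
        (AE v in lborel. Fb v > 0)) \<and>
     (\<forall>Fb lb \<alpha> \<theta> Fb' lb' \<alpha>' \<theta>'.
        is_decomp F1 F2 Q Fb lb \<alpha> \<theta> \<and> nbhd_dist F0 lam0 Fb lb \<alpha> \<theta> < \<eta> \<and>
        is_decomp F1 F2 Q Fb' lb' \<alpha>' \<theta>' \<and> nbhd_dist F0 lam0 Fb' lb' \<alpha>' \<theta>' < \<eta>
        \<longrightarrow> lb = lb' \<and> (AE v in lborel. Fb v = Fb' v) \<and> (AE v in lborel. \<alpha> v = \<alpha>' v)
            \<and> (AE n in sphere_measure. \<theta> n = \<theta>' n))"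
proof -
  define \<eta> where "\<eta> = min lam0 (1 - lam0)"
  have \<eta>: "0 < \<eta>" "\<eta> \<le> lam0" "\<eta> \<le> 1 - lam0" using lam0_pos by (auto simp: \<eta>_def)
  have "\<eta> \<le> 1 + lam0" using \<eta> lam0_pos by linarith
  note unique = is_decomp_unique_near[OF _ _ this]
  obtain \<epsilon> where "0 < \<epsilon>" and exists: "\<forall>F1 F2 Q. inX F1 F2 Q \<and> posX F1 F2 Q \<and>
     normX (\<lambda>v. F1 v - F0 v) (\<lambda>v. F2 v - lam0 * F0 v) (\<lambda>n. Q n - lam0 / (1 - lam0)) < \<epsilon> \<longrightarrow>
     (\<exists>Fb l \<alpha> \<theta>. is_decomp F1 F2 Q Fb l \<alpha> \<theta> \<and> 0 < l \<and> l < 1 \<and>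
        normX \<alpha> (\<lambda>v. - \<alpha> v) \<theta> < \<delta> \<and> nbhd_dist F0 lam0 Fb l \<alpha> \<theta> < \<eta> \<and> (AE v in lborel. 0 < Fb v))"
    using small_perturbation_decomp_exists[OF F0_L12 lam0_pos mass delta \<eta>] by blast
  show ?thesis
    by (rule exI[of _ \<epsilon>], rule conjI[OF \<open>0 < \<epsilon>\<close>], rule exI[of _ \<eta>], rule conjI[OF \<eta>(1)])
      (use exists unique in blast)
qed

end
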